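(* Let $G$ be a finite simple graph. Then the independence complex $\Delta(G)$ is sortable if and only if $G$ is a proper interval graph.
   Context: The independence complex $\Delta(G)$ is the simplicial complex of all independent sets of $G$. For finite $F,G\subset\mathbb{N}$ with $|F|=r,|G|=s$, write $\mathbf{x}^F\mathbf{x}^G=x_{i_1}\cdots x_{i_{r+s}}$ with $i_1\le\cdots\le i_{r+s}$ (where $\mathbf{x}^F=\prod_{i\in F}x_i$) and set $\mathrm{sort}(F,G)=(\{i_k:k\text{ odd}\},\{i_k:k\text{ even}\})$. A simplicial complex $\Delta$ with $V(\Delta)\subset\mathbb{N}$ is sortable with respect to the given labeling if $\mathrm{sort}(F,G)\in\Delta\times\Delta$ for all $F,G\in\Delta$; $\Delta$ is sortable if it is sortable with respect to some labeling of its vertices by distinct integers. A proper interval graph is a graph whose vertices can be assigned real intervals, none properly containing another, such that two vertices are adjacent iff their intervals intersect. *)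

theory Defs
  imports Complex_Main "HOL-Library.Multiset"
begin

definition finite_simple_graph :: "'a set \<Rightarrow> ('a \<Rightarrow> 'a \<Rightarrow> bool) \<Rightarrow> bool" where
  "finite_simple_graph V E \<longleftrightarrow> finite V
     \<and> (\<forall>x y. E x y \<longrightarrow> x \<in> V \<and> y \<in> V)
     \<and> (\<forall>x y. E x y \<longrightarrow> E y x)
     \<and> (\<forall>x. \<not> E x x)"

definition independence_complex :: "'a set \<Rightarrow> ('a \<Rightarrow> 'a \<Rightarrow> bool) \<Rightarrow> 'a set set" where
  "independence_complex V E = {F. F \<subseteq> V \<and> (\<forall>x\<in>F. \<forall>y\<in>F. \<not> E x y)}"

text \<open>sort(F,G): sort the monomial x^F x^G as i_1 \<le> ... \<le> i_{r+s} and split into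
  odd and even positions (1-based; i.e. even / odd 0-based list indices).\<close>
definition sort_pair :: "nat set \<Rightarrow> nat set \<Rightarrow> nat set \<times> nat set" where
  "sort_pair F G =
     (let xs = sorted_list_of_multiset (mset_set F + mset_set G)
      in ({xs ! k | k. k < length xs \<and> even k}, {xs ! k | k. k < length xs \<and> odd k}))"

definition sortable_wrt_labeling :: "nat set set \<Rightarrow> bool" where
  "sortable_wrt_labeling \<Delta> \<longleftrightarrow>
     (\<forall>F\<in>\<Delta>. \<forall>G\<in>\<Delta>. fst (sort_pair F G) \<in> \<Delta> \<and> snd (sort_pair F G) \<in> \<Delta>)"

definition sortable :: "'a set set \<Rightarrow> bool" where
  "sortable \<Delta> \<longleftrightarrow> (\<exists>L :: 'a \<Rightarrow> nat. inj_on L (\<Union>\<Delta>) \<and> sortable_wrt_labeling ((\<lambda>F. L ` F) ` \<Delta>))"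

definition proper_interval_graph :: "'a set \<Rightarrow> ('a \<Rightarrow> 'a \<Rightarrow> bool) \<Rightarrow> bool" where
  "proper_interval_graph V E \<longleftrightarrow>
     (\<exists>a b :: 'a \<Rightarrow> real.
        (\<forall>v\<in>V. a v \<le> b v)
      \<and> (\<forall>u\<in>V. \<forall>v\<in>V. \<not> ({a u..b u} \<subset> {a v..b v}))
      \<and> (\<forall>u\<in>V. \<forall>v\<in>V. u \<noteq> v \<longrightarrow> (E u v \<longleftrightarrow> {a u..b u} \<inter> {a v..b v} \<noteq> {})))"

end

theory Submission
  imports Defs "HOL-Library.Product_Lexorder"
begin

(*
  Call a labelling L of the vertices an umbrella ordering if L x < L y < L z and xz \<in> E
  force xy, yz \<in> E. Both conditions of the theorem are equivalent to the existence of an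
  injective umbrella ordering into the naturals.

  If the labelled complex is sortable and x < y < z with xz \<in> E, then sort({x,y},{z}) and
  sort({y,z},{x}) both have first component {x,z}, which is not independent; hence xy and yz
  are edges. Conversely, for an umbrella ordering, in the sorted merge of two independent sets
  entries two positions apart are non-adjacent, and the umbrella property propagates
  non-adjacency along each parity class, so both halves of the sort are independent.

  Ordering the intervals of a proper interval graph by left endpoints gives an umbrella
  ordering, since right endpoints are then ordered too. Conversely, given an umbrella ordering,
  the interval from L v to the largest label in the closed neighbourhood of v represents G.
*)

definition umbrella_ordering :: "'a set \<Rightarrow> ('a \<Rightarrow> 'a \<Rightarrow> bool) \<Rightarrow> ('a \<Rightarrow> 'b::linorder) \<Rightarrow> bool" where
  "umbrella_ordering V E L \<longleftrightarrow>
     (\<forall>x\<in>V. \<forall>y\<in>V. \<forall>z\<in>V. L x < L y \<longrightarrow> L y < L z \<longrightarrow> E x z \<longrightarrow> E x y \<and> E y z)"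

lemma umbrella_orderingD:
  assumes "umbrella_ordering V E L" "x \<in> V" "y \<in> V" "z \<in> V" "L x < L y" "L y < L z" "E x z"
  shows "E x y" "E y z"
  using assms unfolding umbrella_ordering_def by blast+

lemma umbrella_ordering_not_adjacent_trans:
  assumes "umbrella_ordering V E L" "inj_on L V" "x \<in> V" "y \<in> V" "z \<in> V"
    and "L x \<le> L y" "L y \<le> L z" "\<not> E x y" "\<not> E y z"
  shows "\<not> E x z"
  using assms umbrella_orderingD[OF assms(1,3,4,5)] by (metis inj_onD order_le_less)

definition sorted_merge :: "nat set \<Rightarrow> nat set \<Rightarrow> nat list" where
  "sorted_merge F G = sorted_list_of_multiset (mset_set F + mset_set G)"

lemma sort_pair_sorted_merge:
  "sort_pair F G =
     ({sorted_merge F G ! k | k. k < length (sorted_merge F G) \<and> even k},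
      {sorted_merge F G ! k | k. k < length (sorted_merge F G) \<and> odd k})"
  unfolding sort_pair_def sorted_merge_def Let_def ..

lemma sorted_sorted_merge: "sorted (sorted_merge F G)"
  unfolding sorted_merge_def by simp

lemma count_sorted_merge:
  assumes "finite F" "finite G"
  shows "count (mset (sorted_merge F G)) x = of_bool (x \<in> F) + of_bool (x \<in> G)"
  using assms unfolding sorted_merge_def by simp

lemma set_sorted_merge:
  assumes "finite F" "finite G"
  shows "set (sorted_merge F G) = F \<union> G"
  using assms unfolding sorted_merge_def by simp

lemma two_le_count_if_nth_Suc_eq:
  assumes "Suc k < length xs" "xs ! Suc k = xs ! k"
  shows "2 \<le> count (mset xs) (xs ! k)"
proof -
  have "drop k xs = xs ! k # xs ! Suc k # drop (Suc (Suc k)) xs"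
    using assms(1) by (simp add: Cons_nth_drop_Suc)
  then have "2 \<le> count (mset (drop k xs)) (xs ! k)"
    using assms(2) by simp
  also have "\<dots> \<le> count (mset xs) (xs ! k)"
    by (metis append_take_drop_id count_union le_add2 mset_append)
  finally show ?thesis .
qed

lemma nth_Setcompr_eq_image: "{xs ! k | k. k < length xs \<and> P k} = (!) xs ` {k. k < length xs \<and> P k}"
  by blast

lemma sort_pair_three:
  fixes a b c :: nat
  assumes "a < b" "b < c"
  shows "sort_pair {a, b} {c} = ({a, c}, {b})" "sort_pair {b, c} {a} = ({a, c}, {b})"
proof -
  have merge: "sorted_merge {a, b} {c} = [a, b, c]" "sorted_merge {b, c} {a} = [a, b, c]"
    using assms unfolding sorted_merge_def by simp_all
  have positions: "{k. k < length [a, b, c] \<and> even k} = {0, 2}"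
    "{k. k < length [a, b, c] \<and> odd k} = {1}"
    by (auto simp: less_Suc_eq numeral_2_eq_2)
  show "sort_pair {a, b} {c} = ({a, c}, {b})" "sort_pair {b, c} {a} = ({a, c}, {b})"
    unfolding sort_pair_sorted_merge merge nth_Setcompr_eq_image positions by simp_all
qed

lemma independence_complex_memD:
  assumes "F \<in> independence_complex V E"
  shows "F \<subseteq> V" "x \<in> F \<Longrightarrow> y \<in> F \<Longrightarrow> \<not> E x y"
  using assms unfolding independence_complex_def by auto

lemma sorted_merge_skip_not_adjacent:
  fixes R :: "nat \<Rightarrow> nat \<Rightarrow> bool"
  assumes F: "F \<in> independence_complex W R" and G: "G \<in> independence_complex W R"
    and fin: "finite F" "finite G" and umb: "umbrella_ordering W R id"
    and k: "k + 2 < length (sorted_merge F G)"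
  shows "\<not> R (sorted_merge F G ! k) (sorted_merge F G ! (k + 2))"
proof
  \<comment> \<open>An element of \<open>F \<inter> G\<close> is adjacent to nothing in \<open>F \<union> G\<close>, so the adjacent entries at
    positions \<open>k\<close> and \<open>k + 2\<close> occur only once. Hence the entries at \<open>k, k + 1, k + 2\<close> are distinct,
    the umbrella property makes them a triangle, and two of them come from the same face.\<close>
  define xs where "xs = sorted_merge F G"
  define x y z where "x = xs ! k" and "y = xs ! Suc k" and "z = xs ! Suc (Suc k)"
  assume "R (sorted_merge F G ! k) (sorted_merge F G ! (k + 2))"
  then have Rxz: "R x z"
    by (simp add: x_def z_def xs_def)
  have k': "k < length xs" "Suc k < length xs" "Suc (Suc k) < length xs"
    using k unfolding xs_def by simp_all
  have mem: "x \<in> F \<union> G" "y \<in> F \<union> G" "z \<in> F \<union> G"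
    using k' nth_mem set_sorted_merge[OF fin] unfolding x_def y_def z_def xs_def by metis+
  have indepF: "\<not> R u v" if "u \<in> F" "v \<in> F" for u v
    using independence_complex_memD(2)[OF F that] .
  have indepG: "\<not> R u v" if "u \<in> G" "v \<in> G" for u v
    using independence_complex_memD(2)[OF G that] .
  have simple: "count (mset xs) v < 2" if "v \<in> {x, z}" for v
  proof -
    have "v \<notin> F \<inter> G"
      using that Rxz mem indepF indepG by blast
    then show ?thesis
      using count_sorted_merge[OF fin, of v] unfolding xs_def by simp
  qed
  have "x \<noteq> y"
    using two_le_count_if_nth_Suc_eq[of k xs] simple[of x] k'(2) x_def y_def by fastforce
  moreover have "y \<noteq> z"
    using two_le_count_if_nth_Suc_eq[of "Suc k" xs] simple[of z] k'(3) y_def z_def by fastforce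
  moreover have "x \<le> y" "y \<le> z"
    using sorted_sorted_merge k' unfolding x_def y_def z_def xs_def
    by (simp_all add: sorted_nth_mono)
  moreover have "F \<union> G \<subseteq> W"
    using independence_complex_memD(1) F G by blast
  ultimately have "x < y" "y < z" "x \<in> W" "y \<in> W" "z \<in> W"
    using mem by auto
  then have "R x y" "R y z"
    using umbrella_orderingD[OF umb, of x y z] Rxz by simp_all
  then show False
    using Rxz mem indepF indepG by (metis Un_iff)
qed

lemma sorted_merge_same_parity_not_adjacent:
  fixes R :: "nat \<Rightarrow> nat \<Rightarrow> bool"
  assumes F: "F \<in> independence_complex W R" and G: "G \<in> independence_complex W R"
    and fin: "finite F" "finite G" and umb: "umbrella_ordering W R id" and "symp R"
    and i: "i < length (sorted_merge F G)" and j: "j < length (sorted_merge F G)"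
    and parity: "even i = even j"
  shows "\<not> R (sorted_merge F G ! i) (sorted_merge F G ! j)"
proof -
  define xs where "xs = sorted_merge F G"
  have mem: "xs ! i \<in> F \<union> G" if "i < length xs" for i
    using that set_sorted_merge[OF fin] nth_mem unfolding xs_def by blast
  have W: "F \<union> G \<subseteq> W"
    using independence_complex_memD(1) F G by blast
  have forward: "\<not> R (xs ! i) (xs ! (i + 2 * m))" if "i + 2 * m < length xs" for i m
    using that
  proof (induction m)
    case 0
    then show ?case
      using mem[of i] independence_complex_memD(2)[OF F] independence_complex_memD(2)[OF G]
      by auto
  next
    case (Suc m)
    have lengths: "i < length xs" "i + 2 * m < length xs" "i + 2 * m + 2 < length xs"
      using Suc.prems by simp_all
    then have W': "xs ! i \<in> W" "xs ! (i + 2 * m) \<in> W" "xs ! (i + 2 * m + 2) \<in> W"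
      using mem W by blast+
    have sorted: "xs ! i \<le> xs ! (i + 2 * m)" "xs ! (i + 2 * m) \<le> xs ! (i + 2 * m + 2)"
      using lengths sorted_sorted_merge unfolding xs_def by (simp_all add: sorted_nth_mono)
    have skip: "\<not> R (xs ! (i + 2 * m)) (xs ! (i + 2 * m + 2))"
      using sorted_merge_skip_not_adjacent[OF F G fin umb] lengths(3) unfolding xs_def by simp
    have "\<not> R (xs ! i) (xs ! (i + 2 * m + 2))"
      using umbrella_ordering_not_adjacent_trans[OF umb inj_on_id W', unfolded id_apply,
          OF sorted Suc.IH[OF lengths(2)] skip] .
    then show ?case
      by (simp add: add.assoc)
  qed
  have even_gap: "\<exists>m. q = p + 2 * m" if "p \<le> q" "even p = even q" for p q :: nat
  proof -
    obtain d where "q = p + d"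
      using \<open>p \<le> q\<close> le_iff_add by blast
    moreover from this have "even d"
      using \<open>even p = even q\<close> by (cases "even p") simp_all
    ultimately show ?thesis
      by (auto elim: evenE)
  qed
  show ?thesis
  proof (cases "i \<le> j")
    case True
    then obtain m where j_eq: "j = i + 2 * m"
      using even_gap parity by blast
    have "i + 2 * m < length xs"
      using j unfolding j_eq xs_def .
    from forward[OF this] show ?thesis
      unfolding j_eq xs_def .
  next
    case False
    then obtain m where i_eq: "i = j + 2 * m"
      using even_gap[of j i] parity by auto
    have "j + 2 * m < length xs"
      using i unfolding i_eq xs_def .
    from forward[OF this] show ?thesis
      unfolding i_eq xs_def using \<open>symp R\<close> by (blast dest: sympD)
  qed
qed

lemma sort_pair_mem_independence_complex:
  fixes R :: "nat \<Rightarrow> nat \<Rightarrow> bool"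
  assumes F: "F \<in> independence_complex W R" and G: "G \<in> independence_complex W R"
    and fin: "finite F" "finite G" and umb: "umbrella_ordering W R id" and "symp R"
  shows "fst (sort_pair F G) \<in> independence_complex W R"
    and "snd (sort_pair F G) \<in> independence_complex W R"
proof -
  define xs where "xs = sorted_merge F G"
  have W: "set xs \<subseteq> W"
    using set_sorted_merge[OF fin] independence_complex_memD(1) F G unfolding xs_def by blast
  have "{xs ! k | k. k < length xs \<and> even k = p} \<in> independence_complex W R" for p
    unfolding independence_complex_def
    using W nth_mem sorted_merge_same_parity_not_adjacent[OF assms] unfolding xs_def by blast
  from this[of True] this[of False] show "fst (sort_pair F G) \<in> independence_complex W R"
    and "snd (sort_pair F G) \<in> independence_complex W R"
    unfolding sort_pair_sorted_merge xs_def by simp_all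
qed

lemma umbrella_ordering_if_sortable_wrt_labeling:
  fixes R :: "nat \<Rightarrow> nat \<Rightarrow> bool"
  assumes sortable: "sortable_wrt_labeling (independence_complex W R)"
    and "symp R" "irreflp R"
  shows "umbrella_ordering W R id"
  unfolding umbrella_ordering_def id_apply
proof (intro ballI impI)
  fix x y z assume W: "x \<in> W" "y \<in> W" "z \<in> W" and "x < y" "y < z" and "R x z"
  have edge_free: "{u, v} \<in> independence_complex W R" if "u \<in> W" "v \<in> W" "\<not> R u v" for u v
    using that \<open>symp R\<close> \<open>irreflp R\<close> unfolding independence_complex_def
    by (auto dest: sympD irreflpD)
  have "{x, z} \<notin> independence_complex W R"
    using \<open>R x z\<close> unfolding independence_complex_def by blast
  moreover have "{x, z} \<in> independence_complex W R"
    if "{a, b} \<in> independence_complex W R" "{c} \<in> independence_complex W R"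
      "sort_pair {a, b} {c} = ({x, z}, {y})" for a b c
    using sortable that unfolding sortable_wrt_labeling_def by (metis fst_conv)
  moreover have "{x} \<in> independence_complex W R" "{z} \<in> independence_complex W R"
    using edge_free[of x x] edge_free[of z z] W irreflpD[OF \<open>irreflp R\<close>] by simp_all
  ultimately show "R x y \<and> R y z"
    using edge_free[of x y] edge_free[of y z] W sort_pair_three[OF \<open>x < y\<close> \<open>y < z\<close>]
    by blast
qed

lemma sortable_wrt_labeling_independence_complex_iff:
  fixes R :: "nat \<Rightarrow> nat \<Rightarrow> bool"
  assumes "finite W" "symp R" "irreflp R"
  shows "sortable_wrt_labeling (independence_complex W R) \<longleftrightarrow> umbrella_ordering W R id"
proof
  assume umb: "umbrella_ordering W R id"
  have fin: "finite F" if "F \<in> independence_complex W R" for F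
    using finite_subset[OF independence_complex_memD(1)[OF that] \<open>finite W\<close>] .
  show "sortable_wrt_labeling (independence_complex W R)"
    unfolding sortable_wrt_labeling_def
  proof (intro ballI conjI)
    fix F G assume F: "F \<in> independence_complex W R" and G: "G \<in> independence_complex W R"
    show "fst (sort_pair F G) \<in> independence_complex W R"
      and "snd (sort_pair F G) \<in> independence_complex W R"
      using sort_pair_mem_independence_complex[OF F G fin[OF F] fin[OF G] umb \<open>symp R\<close>] .
  qed
qed (use umbrella_ordering_if_sortable_wrt_labeling assms in blast)

lemma Union_independence_complex:
  assumes "\<And>v. v \<in> V \<Longrightarrow> \<not> E v v"
  shows "\<Union>(independence_complex V E) = V"
proof
  show "V \<subseteq> \<Union>(independence_complex V E)"
  proof
    fix v assume "v \<in> V"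
    then have "{v} \<in> independence_complex V E"
      using assms unfolding independence_complex_def by simp
    then show "v \<in> \<Union>(independence_complex V E)"
      by blast
  qed
qed (auto simp: independence_complex_def)

lemma image_independence_complex:
  assumes "inj_on L V"
  shows "(\<lambda>F. L ` F) ` independence_complex V E =
    independence_complex (L ` V) (\<lambda>i j. E (inv_into V L i) (inv_into V L j))"
proof (intro set_eqI iffI)
  fix S assume "S \<in> (\<lambda>F. L ` F) ` independence_complex V E"
  then obtain F where "S = L ` F" "F \<subseteq> V" "\<forall>x\<in>F. \<forall>y\<in>F. \<not> E x y"
    unfolding independence_complex_def by blast
  then show "S \<in> independence_complex (L ` V) (\<lambda>i j. E (inv_into V L i) (inv_into V L j))"
    using assms unfolding independence_complex_def by (auto simp: subset_iff)
next
  fix S assume S: "S \<in> independence_complex (L ` V) (\<lambda>i j. E (inv_into V L i) (inv_into V L j))"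
  then have "S = L ` inv_into V L ` S"
    unfolding independence_complex_def by (auto simp: image_image f_inv_into_f subset_iff)
  moreover have "inv_into V L ` S \<in> independence_complex V E"
    using S unfolding independence_complex_def by (auto intro: inv_into_into)
  ultimately show "S \<in> (\<lambda>F. L ` F) ` independence_complex V E"
    by blast
qed

lemma umbrella_ordering_inv_into_iff:
  assumes "inj_on L V"
  shows "umbrella_ordering (L ` V) (\<lambda>i j. E (inv_into V L i) (inv_into V L j)) id \<longleftrightarrow>
    umbrella_ordering V E L"
  using assms unfolding umbrella_ordering_def by simp

lemma sortable_independence_complex_iff:
  assumes "finite_simple_graph V E"
  shows "sortable (independence_complex V E) \<longleftrightarrow>
    (\<exists>L :: 'a \<Rightarrow> nat. inj_on L V \<and> umbrella_ordering V E L)"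
proof -
  have "finite V" "symp E" "irreflp E"
    using assms unfolding finite_simple_graph_def symp_def irreflp_def by blast+
  have "sortable_wrt_labeling ((\<lambda>F. L ` F) ` independence_complex V E) \<longleftrightarrow>
      umbrella_ordering V E L" if "inj_on L V" for L :: "'a \<Rightarrow> nat"
  proof -
    let ?R = "\<lambda>i j. E (inv_into V L i) (inv_into V L j)"
    have "symp ?R" "irreflp ?R"
      using \<open>symp E\<close> \<open>irreflp E\<close> unfolding symp_def irreflp_def by blast+
    with \<open>finite V\<close> have "sortable_wrt_labeling (independence_complex (L ` V) ?R) \<longleftrightarrow>
        umbrella_ordering (L ` V) ?R id"
      by (intro sortable_wrt_labeling_independence_complex_iff finite_imageI)
    then show ?thesis
      unfolding image_independence_complex[OF that] umbrella_ordering_inv_into_iff[OF that] .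
  qed
  moreover have "\<Union>(independence_complex V E) = V"
    using Union_independence_complex irreflpD[OF \<open>irreflp E\<close>] by metis
  ultimately show ?thesis
    unfolding sortable_def by metis
qed

lemma umbrella_ordering_comp_strict_mono:
  assumes "umbrella_ordering V E L" "strict_mono_on (L ` V) f"
  shows "umbrella_ordering V E (f \<circ> L)"
  using assms strict_mono_on_less[OF assms(2)] unfolding umbrella_ordering_def by simp

lemma finite_imp_strict_mono_on_to_nat:
  fixes S :: "'b::linorder set"
  assumes "finite S"
  obtains f :: "'b \<Rightarrow> nat" where "strict_mono_on S f"
proof
  show "strict_mono_on S (\<lambda>x. card {y \<in> S. y < x})"
  proof (rule strict_mono_onI)
    fix x y assume "x \<in> S" "y \<in> S" "x < y"
    then have "{z \<in> S. z < x} \<subset> {z \<in> S. z < y}"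
      by auto
    then show "card {z \<in> S. z < x} < card {z \<in> S. z < y}"
      using assms by (simp add: psubset_card_mono)
  qed
qed

lemma umbrella_ordering_to_nat:
  fixes L :: "'a \<Rightarrow> 'b::linorder"
  assumes "finite V" "inj_on L V" "umbrella_ordering V E L"
  obtains L' :: "'a \<Rightarrow> nat" where "inj_on L' V" "umbrella_ordering V E L'"
proof -
  obtain f :: "'b \<Rightarrow> nat" where f: "strict_mono_on (L ` V) f"
    using finite_imp_strict_mono_on_to_nat finite_imageI[OF assms(1)] by metis
  show thesis
  proof
    show "inj_on (f \<circ> L) V"
      using comp_inj_on[OF assms(2) strict_mono_on_imp_inj_on[OF f]] .
    show "umbrella_ordering V E (f \<circ> L)"
      using umbrella_ordering_comp_strict_mono[OF assms(3) f] .
  qed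
qed

lemma right_endpoint_le_if_not_psubset:
  fixes p q s t :: real
  assumes "p \<le> s" "s \<le> t" "\<not> {s..t} \<subset> {p..q}"
  shows "q \<le> t"
proof (rule ccontr)
  assume "\<not> q \<le> t"
  then have "{s..t} \<subseteq> {p..q}" "q \<in> {p..q} - {s..t}"
    using assms(1,2) by auto
  then have "{s..t} \<subset> {p..q}"
    by blast
  with assms(3) show False ..
qed

lemma umbrella_ordering_if_proper_interval_graph:
  assumes "finite V" "proper_interval_graph V E"
  obtains L :: "'a \<Rightarrow> nat" where "inj_on L V" "umbrella_ordering V E L"
proof -
  obtain a b :: "'a \<Rightarrow> real" where ab: "\<forall>v\<in>V. a v \<le> b v"
    and proper: "\<forall>u\<in>V. \<forall>v\<in>V. \<not> {a u..b u} \<subset> {a v..b v}"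
    and edge: "\<forall>u\<in>V. \<forall>v\<in>V. u \<noteq> v \<longrightarrow> (E u v \<longleftrightarrow> {a u..b u} \<inter> {a v..b v} \<noteq> {})"
    using assms(2) unfolding proper_interval_graph_def by blast
  obtain L0 :: "'a \<Rightarrow> nat" where "inj_on L0 V"
    using finite_imp_inj_to_nat_seg[OF assms(1)] by blast
  have b_mono: "b u \<le> b v" if "u \<in> V" "v \<in> V" "a u \<le> a v" for u v
    using right_endpoint_le_if_not_psubset[of "a u" "a v" "b v" "b u"] that ab proper by blast
  \<comment> \<open>Pairs are ordered lexicographically, so \<open>L0\<close> only breaks ties between equal left endpoints.\<close>
  define key where "key v = (a v, L0 v)" for v
  have "inj_on key V"
    using \<open>inj_on L0 V\<close> unfolding key_def by (auto simp: inj_on_def)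
  moreover have "umbrella_ordering V E key"
    unfolding umbrella_ordering_def
  proof (intro ballI impI)
    fix x y z assume V: "x \<in> V" "y \<in> V" "z \<in> V"
      and "key x < key y" "key y < key z" and "E x z"
    then have "x \<noteq> y" "y \<noteq> z" "x \<noteq> z" and left: "a x \<le> a y" "a y \<le> a z"
      unfolding key_def by auto
    have "b x \<le> b y"
      using b_mono V left by blast
    moreover have "a z \<le> b x"
      using edge V \<open>x \<noteq> z\<close> \<open>E x z\<close> left ab by auto
    ultimately show "E x y \<and> E y z"
      using edge V \<open>x \<noteq> y\<close> \<open>y \<noteq> z\<close> left ab by auto
  qed
  ultimately show thesis
    using umbrella_ordering_to_nat assms(1) that by blast
qed

lemma umbrella_ordering_reach:
  fixes L :: "'a \<Rightarrow> 'b::linorder"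
  assumes "finite V" "inj_on L V" "umbrella_ordering V E L"
  obtains r :: "'a \<Rightarrow> 'b"
  where "\<And>v. v \<in> V \<Longrightarrow> L v \<le> r v"
    and "\<And>u v. u \<in> V \<Longrightarrow> v \<in> V \<Longrightarrow> L u < L v \<Longrightarrow> r u \<le> r v"
    and "\<And>u v. u \<in> V \<Longrightarrow> v \<in> V \<Longrightarrow> L u < L v \<Longrightarrow> E u v \<longleftrightarrow> L v \<le> r u"
proof
  define N where "N v = {w \<in> V. w = v \<or> E v w}" for v
  define r where "r v = Max (L ` N v)" for v
  have finite: "finite (L ` N v)" for v
    unfolding N_def using assms(1) by simp
  have r_ge: "L w \<le> r v" if "w \<in> N v" for v w
    unfolding r_def using finite that by simp
  have r_attained: "\<exists>w\<in>N v. L w = r v" if "v \<in> V" for v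
  proof -
    have "L ` N v \<noteq> {}"
      using that unfolding N_def by auto
    then show ?thesis
      unfolding r_def using Max_in[OF finite] by force
  qed
  show L_le_r: "L v \<le> r v" if "v \<in> V" for v
    using r_ge that unfolding N_def by simp
  show "E u v \<longleftrightarrow> L v \<le> r u" if V: "u \<in> V" "v \<in> V" and "L u < L v" for u v
  proof
    assume "E u v"
    then show "L v \<le> r u"
      using r_ge V unfolding N_def by simp
  next
    assume "L v \<le> r u"
    obtain w where w: "w \<in> N u" "L w = r u"
      using r_attained V by blast
    then have "w \<noteq> u"
      using \<open>L v \<le> r u\<close> \<open>L u < L v\<close> by auto
    then have "E u w" "w \<in> V"
      using w unfolding N_def by auto
    show "E u v"
    proof (cases "w = v")
      case False
      then have "L v \<noteq> L w"
        using inj_onD[OF assms(2), of v w] V(2) \<open>w \<in> V\<close> by blast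
      then have "L v < L w"
        using \<open>L v \<le> r u\<close> w(2) by simp
      then show ?thesis
        using umbrella_orderingD(1)[OF assms(3) V \<open>w \<in> V\<close> \<open>L u < L v\<close> _ \<open>E u w\<close>] by blast
    qed (use \<open>E u w\<close> in simp)
  qed
  show "r u \<le> r v" if V: "u \<in> V" "v \<in> V" and "L u < L v" for u v
  proof -
    obtain w where w: "w \<in> N u" "L w = r u"
      using r_attained V by blast
    show ?thesis
    proof (cases "w = u \<or> L w \<le> L v")
      case True
      then show ?thesis
        using w \<open>L u < L v\<close> L_le_r[OF V(2)] by auto
    next
      case False
      then have "E u w" "w \<in> V" "L v < L w"
        using w unfolding N_def by auto
      then have "E v w"
        using umbrella_orderingD(2)[OF assms(3) V _ \<open>L u < L v\<close>] by blast
      then have "w \<in> N v"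
        using \<open>w \<in> V\<close> unfolding N_def by simp
      then show ?thesis
        using r_ge w by fastforce
    qed
  qed
qed

lemma proper_interval_graph_if_reach:
  fixes L r :: "'a \<Rightarrow> nat"
  assumes inj: "inj_on L V" and "symp E"
    and L_le_r: "\<And>v. v \<in> V \<Longrightarrow> L v \<le> r v"
    and r_mono: "\<And>u v. u \<in> V \<Longrightarrow> v \<in> V \<Longrightarrow> L u < L v \<Longrightarrow> r u \<le> r v"
    and edge: "\<And>u v. u \<in> V \<Longrightarrow> v \<in> V \<Longrightarrow> L u < L v \<Longrightarrow> E u v \<longleftrightarrow> L v \<le> r u"
  shows "proper_interval_graph V E"
proof -
  \<comment> \<open>The interval of \<open>v\<close> is \<open>[L v, r v]\<close>, lengthened by a fraction increasing in \<open>L v\<close> so that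
    right endpoints strictly increase along the labelling and no interval contains another.\<close>
  define a where "a v = real (L v)" for v
  define b where "b v = real (r v) + real (L v) / (real (L v) + 1)" for v
  have frac: "0 \<le> real n / (real n + 1)" "real n / (real n + 1) < 1" for n :: nat
    by (simp_all add: field_simps)
  have frac_mono: "real m / (real m + 1) < real n / (real n + 1)" if "m < n" for m n :: nat
    using that by (simp add: field_simps)
  have ab: "a v \<le> b v" if "v \<in> V" for v
    using L_le_r[OF that] frac(1)[of "L v"] unfolding a_def b_def by linarith
  have strict: "a u < a v \<and> b u < b v" if "u \<in> V" "v \<in> V" "L u < L v" for u v
    using that r_mono[OF that] frac_mono[OF that(3)] unfolding a_def b_def by simp
  have meet: "{a u..b u} \<inter> {a v..b v} \<noteq> {} \<longleftrightarrow> E u v"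
    if V: "u \<in> V" "v \<in> V" and "L u < L v" for u v
  proof -
    have "{a u..b u} \<inter> {a v..b v} \<noteq> {} \<longleftrightarrow> a v \<le> b u"
      using ab[OF V(1)] ab[OF V(2)] strict[OF V \<open>L u < L v\<close>] by auto
    also have "\<dots> \<longleftrightarrow> L v \<le> r u"
      using frac[of "L u"] unfolding a_def b_def by linarith
    also have "\<dots> \<longleftrightarrow> E u v"
      using edge[OF V \<open>L u < L v\<close>] ..
    finally show ?thesis .
  qed
  have order_cases: "L u < L v \<or> L v < L u" if "u \<in> V" "v \<in> V" "u \<noteq> v" for u v
    using inj_onD[OF inj _ that(1,2)] that(3) by fastforce
  show ?thesis
    unfolding proper_interval_graph_def
  proof (intro exI conjI ballI impI)
    show "a v \<le> b v" if "v \<in> V" for v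
      using ab that .
  next
    fix u v assume V: "u \<in> V" "v \<in> V"
    show "\<not> {a u..b u} \<subset> {a v..b v}"
    proof (cases "u = v")
      case False
      then consider "a u < a v" "a u \<in> {a u..b u}" | "b v < b u" "b u \<in> {a u..b u}"
        using order_cases[OF V] strict V ab by fastforce
      then show ?thesis
        by cases auto
    qed simp
  next
    fix u v assume V: "u \<in> V" "v \<in> V" and "u \<noteq> v"
    then show "E u v \<longleftrightarrow> {a u..b u} \<inter> {a v..b v} \<noteq> {}"
      using order_cases meet meet[OF V(2,1)] sympD[OF \<open>symp E\<close>] by (metis Int_commute)
  qed
qed

lemma proper_interval_graph_iff_umbrella_ordering:
  assumes "finite_simple_graph V E"
  shows "proper_interval_graph V E \<longleftrightarrow>
    (\<exists>L :: 'a \<Rightarrow> nat. inj_on L V \<and> umbrella_ordering V E L)"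
proof
  have "finite V"
    using assms unfolding finite_simple_graph_def by blast
  then show "\<exists>L :: 'a \<Rightarrow> nat. inj_on L V \<and> umbrella_ordering V E L"
    if "proper_interval_graph V E"
    using umbrella_ordering_if_proper_interval_graph that by metis
  have "symp E"
    using assms unfolding finite_simple_graph_def symp_def by blast
  show "proper_interval_graph V E" if "\<exists>L :: 'a \<Rightarrow> nat. inj_on L V \<and> umbrella_ordering V E L"
  proof -
    from that obtain L :: "'a \<Rightarrow> nat" where L: "inj_on L V" "umbrella_ordering V E L"
      by blast
    obtain r where "\<And>v. v \<in> V \<Longrightarrow> L v \<le> r v"
      "\<And>u v. u \<in> V \<Longrightarrow> v \<in> V \<Longrightarrow> L u < L v \<Longrightarrow> r u \<le> r v"
      "\<And>u v. u \<in> V \<Longrightarrow> v \<in> V \<Longrightarrow> L u < L v \<Longrightarrow> E u v \<longleftrightarrow> L v \<le> r u"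
      using umbrella_ordering_reach[OF \<open>finite V\<close> L] by blast
    with \<open>inj_on L V\<close> \<open>symp E\<close> show ?thesis
      by (rule proper_interval_graph_if_reach)
  qed
qed

theorem theorem1p8:
  fixes V :: "'a set" and E :: "'a \<Rightarrow> 'a \<Rightarrow> bool"
  assumes "finite_simple_graph V E"
  shows "sortable (independence_complex V E) \<longleftrightarrow> proper_interval_graph V E"
  unfolding sortable_independence_complex_iff[OF assms]
    proper_interval_graph_iff_umbrella_ordering[OF assms] ..

end
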